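(* Let $\mathcal{I}\subseteq[K]$ be nonempty, $\theta>0$, and let $\psi,r$ be strictly convex twice differentiable functions on $\Omega\subseteq\mathbb{R}$ such that, for positive learning rates $\gamma^s_i$ ($s\in\{t,t+1\}$, $i\in\mathcal{I}$), each $\gamma^s_i\psi+\theta r$ has invertible derivative whose inverse is differentiable and convex. Let $\phi^s_{\mathcal{I}}(x)=\sum_{i\in\mathcal{I}}(\gamma^s_i\psi(x_i)+\theta r(x_i))$, $\hat\ell^t\in\mathbb{R}^K$, $c\in\mathbb{R}$, and $p,q$ with $p_i,q_i\in\Omega$ for $i\in\mathcal{I}$, $\sum_{i\in\mathcal{I}}p_i=\sum_{i\in\mathcal{I}}q_i$, and $\nabla\phi^{t+1}_{\mathcal{I}}(q)=\nabla\phi^t_{\mathcal{I}}(p)-\hat\ell^t_{\mathcal{I}}+c\cdot\mathbf{1}_{\mathcal{I}}$. Writing $A_i(u)=\gamma^{t+1}_i\psi''(u)+\theta r''(u)$ and $B_i(u)=\gamma^{t}_i\psi''(u)+\theta r''(u)$, we have $$c\le\Big(\sum_{i\in\mathcal{I}}\frac{1}{A_i(p_i)}\Big)^{-1}\sum_{i\in\mathcal{I}}\frac{(\gamma^{t+1}_i-\gamma^t_i)\psi'(p_i)+\hat\ell^t_i}{A_i(p_i)},\qquad c\ge\Big(\sum_{i\in\mathcal{I}}\frac{1}{B_i(q_i)}\Big)^{-1}\sum_{i\in\mathcal{I}}\frac{(\gamma^{t+1}_i-\gamma^t_i)\psi'(q_i)+\hat\ell^t_i}{B_i(q_i)},$$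 $$c\le\Big(\sum_{i\in\mathcal{I}}\frac{1}{B_i(p_i)}\Big)^{-1}\sum_{i\in\mathcal{I}}\frac{(\gamma^{t+1}_i-\gamma^t_i)\psi'(q_i)+\hat\ell^t_i}{B_i(p_i)},\qquad c\ge\Big(\sum_{i\in\mathcal{I}}\frac{1}{A_i(q_i)}\Big)^{-1}\sum_{i\in\mathcal{I}}\frac{(\gamma^{t+1}_i-\gamma^t_i)\psi'(p_i)+\hat\ell^t_i}{A_i(q_i)}.$$
   Context: Gradients of $\phi^s_{\mathcal{I}}$ are taken coordinatewise on $\mathcal{I}$; $v_{\mathcal{I}}$ agrees with $v$ on $\mathcal{I}$ and is $0$ elsewhere; $\mathbf{1}_{\mathcal{I}}$ is the indicator vector of $\mathcal{I}$; the gradient equation is required coordinatewise for $i\in\mathcal{I}$. *)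

theory Defs
  imports "HOL-Analysis.Analysis"
begin

definition strictly_convex_on :: "real set \<Rightarrow> (real \<Rightarrow> real) \<Rightarrow> bool" where
  "strictly_convex_on S f \<longleftrightarrow> convex S \<and>
     (\<forall>x\<in>S. \<forall>y\<in>S. \<forall>u. x \<noteq> y \<and> 0 < u \<and> u < 1 \<longrightarrow>
        f ((1 - u) * x + u * y) < (1 - u) * f x + u * f y)"

end

theory Submission
  imports Defs
begin

text \<open>For a mirror map \<open>H = \<gamma> \<psi>' + \<theta> r'\<close> the inverse \<open>H\<^sup>-\<^sup>1\<close> is convex, so the tangent
  inequality for \<open>H\<^sup>-\<^sup>1\<close> at \<open>H(p\<^sub>i)\<close> gives \<open>H(q\<^sub>i) - H(p\<^sub>i) \<le> H'(p\<^sub>i) (q\<^sub>i - p\<^sub>i)\<close>, and the gradient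
  equation says that \<open>H(q\<^sub>i) - H(p\<^sub>i)\<close> is \<open>c\<close> minus a known quantity. Dividing by \<open>H'(p\<^sub>i) > 0\<close>
  and summing over \<open>\<I>\<close>, the left-hand sides cancel because \<open>\<Sum> p\<^sub>i = \<Sum> q\<^sub>i\<close>, which
  isolates \<open>c\<close>. Exchanging \<open>p\<close> and \<open>q\<close>, and using either learning rate, gives the four bounds.\<close>

lemma strictly_convex_on_imp_convex_on:
  assumes "strictly_convex_on S f"
  shows "convex_on S f"
proof (rule convex_onI)
  show "convex S" using assms by (simp add: strictly_convex_on_def)
next
  fix t x y :: real assume "0 < t" "t < 1" "x \<in> S" "y \<in> S"
  show "f ((1 - t) *\<^sub>R x + t *\<^sub>R y) \<le> (1 - t) * f x + t * f y"
  proof (cases "x = y")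
    case False
    with \<open>0 < t\<close> \<open>t < 1\<close> \<open>x \<in> S\<close> \<open>y \<in> S\<close> assms
    have "f ((1 - t) * x + t * y) < (1 - t) * f x + t * f y"
      unfolding strictly_convex_on_def by blast
    then show ?thesis by simp
  qed (simp add: algebra_simps)
qed

lemma convex_on_derivative_mono:
  fixes f :: "real \<Rightarrow> real"
  assumes "open S" and convex: "convex_on S f"
    and deriv: "\<And>x. x \<in> S \<Longrightarrow> (f has_real_derivative f' x) (at x)"
  shows "mono_on S f'"
proof (rule mono_onI)
  fix x y assume x: "x \<in> S" and y: "y \<in> S" and "x \<le> y"
  have connected: "connected S"
    using convex convex_on_imp_convex convex_connected by blast
  have tangent: "f' a * (b - a) \<le> f b - f a" if "a \<in> S" "b \<in> S" for a b
    using that \<open>open S\<close> deriv[OF \<open>a \<in> S\<close>]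
    by (intro convex_on_imp_above_tangent[OF convex connected])
       (auto simp: interior_open intro: has_field_derivative_at_within)
  have "(f' y - f' x) * (y - x) \<ge> 0"
    using tangent[OF x y] tangent[OF y x] by (simp add: algebra_simps)
  then show "f' x \<le> f' y"
    using \<open>x \<le> y\<close> by (cases "x = y") (auto simp: zero_le_mult_iff)
qed

lemma convex_on_second_derivative_nonneg:
  fixes f :: "real \<Rightarrow> real"
  assumes "open S" and "convex_on S f"
    and "\<And>x. x \<in> S \<Longrightarrow> (f has_real_derivative f' x) (at x)"
    and "\<And>x. x \<in> S \<Longrightarrow> (f' has_real_derivative f'' x) (at x)"
    and "x \<in> S"
  shows "0 \<le> f'' x"
  using assms convex_on_derivative_mono[OF assms(1-3)]
  by (intro mono_on_imp_deriv_nonneg[of S f']) (auto simp: interior_open)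

lemma open_image_if_inj_on_has_derivative:
  fixes H :: "real \<Rightarrow> real"
  assumes "open S"
    and "\<And>x. x \<in> S \<Longrightarrow> (H has_real_derivative H' x) (at x)"
    and "inj_on H S"
  shows "open (H ` S)"
proof -
  have "continuous_on S H"
    using assms(2) by (intro continuous_at_imp_continuous_on) (blast intro: DERIV_isCont)
  with assms(1,3) show ?thesis
    using invariance_of_domain by blast
qed

lemma has_real_derivative_inv_into:
  fixes H :: "real \<Rightarrow> real"
  assumes "open S"
    and deriv: "\<And>x. x \<in> S \<Longrightarrow> (H has_real_derivative H' x) (at x)"
    and inj: "inj_on H S"
    and "inv_into S H differentiable_on (H ` S)"
    and x: "x \<in> S"
  shows "H' x \<noteq> 0 \<and> (inv_into S H has_real_derivative inverse (H' x)) (at (H x))"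
proof -
  have "open (H ` S)"
    using open_image_if_inj_on_has_derivative[OF \<open>open S\<close> deriv inj] .
  then have "inv_into S H differentiable (at (H x))"
    using assms(4) x at_within_open[of "H x" "H ` S"] by (auto simp: differentiable_on_def)
  then obtain D where D: "(inv_into S H has_real_derivative D) (at (H x))"
    by (auto simp: real_differentiable_def)
  have "((inv_into S H \<circ> H) has_real_derivative D * H' x) (at x)"
    using DERIV_chain[OF D deriv[OF x]] .
  moreover have "(inv_into S H \<circ> H) z = z" if "z \<in> S" for z
    using inj that by simp
  ultimately have "((\<lambda>z. z) has_real_derivative D * H' x) (at x)"
    by (rule has_field_derivative_transform_within_open[OF _ \<open>open S\<close> x])
  then have "D * H' x = 1"
    using DERIV_ident by (rule DERIV_unique)
  then have "H' x \<noteq> 0" and "D = inverse (H' x)"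
    by (auto simp: inverse_unique mult.commute)
  with D show ?thesis
    by simp
qed

lemma convex_inv_into_tangent_bound:
  fixes H :: "real \<Rightarrow> real"
  assumes "open S"
    and deriv: "\<And>x. x \<in> S \<Longrightarrow> (H has_real_derivative H' x) (at x)"
    and inj: "inj_on H S"
    and "inv_into S H differentiable_on (H ` S)"
    and convex: "convex_on (H ` S) (inv_into S H)"
    and x: "x \<in> S" and y: "y \<in> S"
  shows "(H y - H x) / H' x \<le> y - x"
proof -
  have D: "(inv_into S H has_real_derivative inverse (H' x)) (at (H x))"
    using has_real_derivative_inv_into[OF assms(1-4) x] by blast
  have "open (H ` S)"
    using open_image_if_inj_on_has_derivative[OF \<open>open S\<close> deriv inj] .
  moreover have "connected (H ` S)"
    using convex convex_on_imp_convex convex_connected by blast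
  ultimately have "inverse (H' x) * (H y - H x) \<le> inv_into S H (H y) - inv_into S H (H x)"
    using x y D
    by (intro convex_on_imp_above_tangent[OF convex])
       (auto simp: interior_open intro: has_field_derivative_at_within)
  then show ?thesis
    using inj x y by (simp add: divide_inverse mult.commute)
qed

lemma convex_inv_into_diff_le:
  fixes H :: "real \<Rightarrow> real"
  assumes "open S"
    and "\<And>x. x \<in> S \<Longrightarrow> (H has_real_derivative H' x) (at x)"
    and "inj_on H S"
    and "inv_into S H differentiable_on (H ` S)"
    and "convex_on (H ` S) (inv_into S H)"
    and "x \<in> S" and "y \<in> S" and "0 \<le> H' x"
  shows "0 < H' x \<and> H y - H x \<le> H' x * (y - x)"
proof -
  have "0 < H' x"
    using has_real_derivative_inv_into[OF assms(1-4,6)] \<open>0 \<le> H' x\<close> by auto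
  with convex_inv_into_tangent_bound[OF assms(1-7)] show ?thesis
    by (simp add: pos_divide_le_eq mult.commute)
qed

lemma mirror_map_diff_le:
  fixes \<psi>' \<psi>'' r' r'' :: "real \<Rightarrow> real" and g \<theta> :: real
  defines "H \<equiv> \<lambda>x. g * \<psi>' x + \<theta> * r' x"
  assumes "open S"
    and "\<And>x. x \<in> S \<Longrightarrow> (\<psi>' has_real_derivative \<psi>'' x) (at x)"
    and "\<And>x. x \<in> S \<Longrightarrow> (r' has_real_derivative r'' x) (at x)"
    and "0 \<le> g" "0 \<le> \<theta>" "0 \<le> \<psi>'' x" "0 \<le> r'' x"
    and "inj_on H S \<and> inv_into S H differentiable_on H ` S \<and> convex_on (H ` S) (inv_into S H)"
    and "x \<in> S" "y \<in> S"
  shows "0 < g * \<psi>'' x + \<theta> * r'' x \<and> H y - H x \<le> (g * \<psi>'' x + \<theta> * r'' x) * (y - x)"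
proof (rule convex_inv_into_diff_le[where H' = "\<lambda>x. g * \<psi>'' x + \<theta> * r'' x"])
  show "(H has_real_derivative g * \<psi>'' z + \<theta> * r'' z) (at z)" if "z \<in> S" for z
    unfolding H_def using assms(3,4)[OF that] by (auto intro!: derivative_eq_intros)
qed (use assms in auto)

lemma sum_zero_imp_le_weighted_mean:
  fixes W v x :: "'a \<Rightarrow> real"
  assumes "finite I" "I \<noteq> {}" and "(\<Sum>i\<in>I. x i) = 0"
    and bound: "\<And>i. i \<in> I \<Longrightarrow> 0 < W i \<and> c - v i \<le> W i * x i"
  shows "c \<le> inverse (\<Sum>i\<in>I. 1 / W i) * (\<Sum>i\<in>I. v i / W i)"
proof -
  have "(\<Sum>i\<in>I. (c - v i) / W i) \<le> (\<Sum>i\<in>I. x i)"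
    using bound by (intro sum_mono) (simp add: pos_divide_le_eq mult.commute)
  then have "c * (\<Sum>i\<in>I. 1 / W i) \<le> (\<Sum>i\<in>I. v i / W i)"
    using assms(3) by (simp add: diff_divide_distrib sum_subtractf sum_distrib_left)
  moreover have "0 < (\<Sum>i\<in>I. 1 / W i)"
    using assms by (intro sum_pos) auto
  ultimately show ?thesis
    by (simp add: field_simps)
qed

lemma sum_zero_imp_weighted_mean_le:
  fixes W v x :: "'a \<Rightarrow> real"
  assumes "finite I" "I \<noteq> {}" and "(\<Sum>i\<in>I. x i) = 0"
    and "\<And>i. i \<in> I \<Longrightarrow> 0 < W i \<and> v i - c \<le> W i * x i"
  shows "inverse (\<Sum>i\<in>I. 1 / W i) * (\<Sum>i\<in>I. v i / W i) \<le> c"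
  using sum_zero_imp_le_weighted_mean[of I x W "-c" "\<lambda>i. - v i"] assms
  by (simp add: sum_negf)

theorem lemma36:
  fixes K :: nat and I :: "nat set" and \<Omega> :: "real set" and \<theta> c :: real
    and \<psi> \<psi>' \<psi>'' r r' r'' :: "real \<Rightarrow> real"
    and \<gamma>t \<gamma>t1 :: "nat \<Rightarrow> real"
    and lhat p q :: "nat \<Rightarrow> real"
  assumes I_sub: "I \<subseteq> {1..K}" and I_ne: "I \<noteq> {}"
    and theta_pos: "\<theta> > 0"
    and Omega_open: "open \<Omega>"
    and psi_sc: "strictly_convex_on \<Omega> \<psi>" and r_sc: "strictly_convex_on \<Omega> r"
    and psi_d1: "\<And>x. x \<in> \<Omega> \<Longrightarrow> (\<psi> has_real_derivative \<psi>' x) (at x)"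
    and psi_d2: "\<And>x. x \<in> \<Omega> \<Longrightarrow> (\<psi>' has_real_derivative \<psi>'' x) (at x)"
    and r_d1: "\<And>x. x \<in> \<Omega> \<Longrightarrow> (r has_real_derivative r' x) (at x)"
    and r_d2: "\<And>x. x \<in> \<Omega> \<Longrightarrow> (r' has_real_derivative r'' x) (at x)"
    and gam_pos: "\<And>i. i \<in> I \<Longrightarrow> \<gamma>t i > 0 \<and> \<gamma>t1 i > 0"
    and inv_t: "\<And>i. i \<in> I \<Longrightarrow>
        inj_on (\<lambda>x. \<gamma>t i * \<psi>' x + \<theta> * r' x) \<Omega> \<and>
        inv_into \<Omega> (\<lambda>x. \<gamma>t i * \<psi>' x + \<theta> * r' x)
          differentiable_on ((\<lambda>x. \<gamma>t i * \<psi>' x + \<theta> * r' x) ` \<Omega>) \<and>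
        convex_on ((\<lambda>x. \<gamma>t i * \<psi>' x + \<theta> * r' x) ` \<Omega>)
          (inv_into \<Omega> (\<lambda>x. \<gamma>t i * \<psi>' x + \<theta> * r' x))"
    and inv_t1: "\<And>i. i \<in> I \<Longrightarrow>
        inj_on (\<lambda>x. \<gamma>t1 i * \<psi>' x + \<theta> * r' x) \<Omega> \<and>
        inv_into \<Omega> (\<lambda>x. \<gamma>t1 i * \<psi>' x + \<theta> * r' x)
          differentiable_on ((\<lambda>x. \<gamma>t1 i * \<psi>' x + \<theta> * r' x) ` \<Omega>) \<and>
        convex_on ((\<lambda>x. \<gamma>t1 i * \<psi>' x + \<theta> * r' x) ` \<Omega>)
          (inv_into \<Omega> (\<lambda>x. \<gamma>t1 i * \<psi>' x + \<theta> * r' x))"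
    and p_in: "\<And>i. i \<in> I \<Longrightarrow> p i \<in> \<Omega>" and q_in: "\<And>i. i \<in> I \<Longrightarrow> q i \<in> \<Omega>"
    and sum_eq: "(\<Sum>i\<in>I. p i) = (\<Sum>i\<in>I. q i)"
    and grad: "\<And>i. i \<in> I \<Longrightarrow>
        \<gamma>t1 i * \<psi>' (q i) + \<theta> * r' (q i) = \<gamma>t i * \<psi>' (p i) + \<theta> * r' (p i) - lhat i + c"
  shows
    "c \<le> inverse (\<Sum>i\<in>I. 1 / (\<gamma>t1 i * \<psi>'' (p i) + \<theta> * r'' (p i))) *
          (\<Sum>i\<in>I. ((\<gamma>t1 i - \<gamma>t i) * \<psi>' (p i) + lhat i) / (\<gamma>t1 i * \<psi>'' (p i) + \<theta> * r'' (p i)))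
     \<and> c \<ge> inverse (\<Sum>i\<in>I. 1 / (\<gamma>t i * \<psi>'' (q i) + \<theta> * r'' (q i))) *
          (\<Sum>i\<in>I. ((\<gamma>t1 i - \<gamma>t i) * \<psi>' (q i) + lhat i) / (\<gamma>t i * \<psi>'' (q i) + \<theta> * r'' (q i)))
     \<and> c \<le> inverse (\<Sum>i\<in>I. 1 / (\<gamma>t i * \<psi>'' (p i) + \<theta> * r'' (p i))) *
          (\<Sum>i\<in>I. ((\<gamma>t1 i - \<gamma>t i) * \<psi>' (q i) + lhat i) / (\<gamma>t i * \<psi>'' (p i) + \<theta> * r'' (p i)))
     \<and> c \<ge> inverse (\<Sum>i\<in>I. 1 / (\<gamma>t1 i * \<psi>'' (q i) + \<theta> * r'' (q i))) *
          (\<Sum>i\<in>I. ((\<gamma>t1 i - \<gamma>t i) * \<psi>' (p i) + lhat i) / (\<gamma>t1 i * \<psi>'' (q i) + \<theta> * r'' (q i)))"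
proof -
  have fin: "finite I"
    using I_sub finite_subset by blast
  have curv_nonneg: "0 \<le> \<psi>'' x" "0 \<le> r'' x" if "x \<in> \<Omega>" for x
    using convex_on_second_derivative_nonneg[OF Omega_open _ psi_d1 psi_d2]
      convex_on_second_derivative_nonneg[OF Omega_open _ r_d1 r_d2]
      strictly_convex_on_imp_convex_on psi_sc r_sc that
    by blast+
  have diff_le: "0 < g * \<psi>'' x + \<theta> * r'' x \<and>
      (g * \<psi>' y + \<theta> * r' y) - (g * \<psi>' x + \<theta> * r' x) \<le> (g * \<psi>'' x + \<theta> * r'' x) * (y - x)"
    if "g \<in> {\<gamma>t i, \<gamma>t1 i}" "i \<in> I" and x: "x \<in> \<Omega>" and y: "y \<in> \<Omega>" for g i x y
    using that(1) gam_pos[OF that(2)] inv_t[OF that(2)] inv_t1[OF that(2)] theta_pos curv_nonneg[OF x]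
    by (intro mirror_map_diff_le[OF Omega_open psi_d2 r_d2 _ _ _ _ _ x y]) auto
  have qp: "(\<Sum>i\<in>I. q i - p i) = 0" and pq: "(\<Sum>i\<in>I. p i - q i) = 0"
    using sum_eq by (simp_all add: sum_subtractf)
  show ?thesis
    apply (intro conjI; rule sum_zero_imp_le_weighted_mean[OF fin I_ne qp]
        sum_zero_imp_weighted_mean_le[OF fin I_ne pq])
    subgoal for i using diff_le[of "\<gamma>t1 i" i "p i" "q i"] grad[of i] p_in q_in by (simp add: algebra_simps)
    subgoal for i using diff_le[of "\<gamma>t i" i "q i" "p i"] grad[of i] p_in q_in by (simp add: algebra_simps)
    subgoal for i using diff_le[of "\<gamma>t i" i "p i" "q i"] grad[of i] p_in q_in by (simp add: algebra_simps)
    subgoal for i using diff_le[of "\<gamma>t1 i" i "q i" "p i"] grad[of i] p_in q_in by (simp add: algebra_simps)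
    done
qed

end
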